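(* Let $H$, $d$, $(X,\mu)$, $\mathcal{A}$, $(N_s)$, $\delta_r,s_r,\sigma_s$ be as in the context, and fix an integer $r\ge3$. Let $\mathcal{Q}$ be a partition of $[r]=\{1,\dots,r\}$ with $|\mathcal{Q}|\ge2$, let $0\le\alpha<\beta$ and let $s>s_r+r$ be an integer. Then for every $\underline h=(h_1,\dots,h_r)\in\Delta_{\mathcal{Q}}(\alpha,\beta)$ and every $f\in\mathcal{A}$, $$|\mathrm{cum}_{[r]}(h_1\cdot f,\dots,h_r\cdot f)|\le C_{r,s}\,e^{-(\beta\delta_r-r\alpha\sigma_s)}N_s(f)^r,$$ where $C_{r,s}$ depends only on $r$ and $s$.
   Context: $H$ is a locally compact second countable group with left-invariant metric $d$, acting measure-preservingly on a probability space $(X,\mu)$; $h\cdot f=f\circ h^{-1}$. $\mathcal{A}\subset L^\infty(X,\mu)$ is an $H$-invariant subalgebra and $(N_s)_{s\ge1}$ seminorms on it with, for all $s$ (constants depending only on $s$): $N_s(f)\ll N_{s+1}(f)$; $\|f\|_{L^\infty}\ll N_s(f)$; $N_s(h\cdot f)\ll e^{\sigma_s d(h,e)}N_s(f)$ for some $\sigma_s>0$; $N_s(f_1f_2)\ll N_{s+1}(f_1)N_{s+1}(f_2)$. Exponential mixing of all orders: for every $k\ge2$ there are $\delta_k>0$ and an integer $s_k>0$ with $\big|\mu(\prod_{i=1}^k h_i\cdot f_i)-\prod_i\mu(f_i)\big|\ll_{k,s}e^{-\delta_k\min_{i\ne j}d(h_i,h_j)}\prod_iN_s(f_i)$ for all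 $s>s_k$, $f_i\in\mathcal{A}$, $h_i\in H$; $(\sigma_s)$ and $(s_k)$ are increasing, $(\delta_k)$ decreasing, and $\delta_k<k\sigma_s$ for all $k,s$. For $\underline h\in H^r$, $I,J\subset[r]$: $d^I(\underline h)=\max\{d(h_i,h_j):i,j\in I\}$, $d_{I,J}(\underline h)=\min\{d(h_i,h_j):i\in I,j\in J\}$; for a partition $\mathcal{Q}$, $d^{\mathcal{Q}}(\underline h)=\max_{I\in\mathcal{Q}}d^I(\underline h)$ and $d_{\mathcal{Q}}(\underline h)=\min\{d_{I,J}(\underline h):I\ne J\in\mathcal{Q}\}$; $\Delta_{\mathcal{Q}}(\alpha,\beta)=\{\underline h\in H^r:d^{\mathcal{Q}}(\underline h)\le\alpha,\ d_{\mathcal{Q}}(\underline h)>\beta\}$. Cumulant: with $\mathfrak{P}_{[r]}$ the set of cyclically ordered partitions of $[r]$ (partitions into non-empty blocks with a cyclic order on the blocks), $\mathrm{cum}_{[r]}(f_1,\dots,f_r)=\sum_{\mathcal{P}\in\mathfrak{P}_{[r]}}(-1)^{|\mathcal{P}|-1}\prod_{I\in\mathcal{P}}\mu(\prod_{i\in I}f_i)$. *)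

theory Defs
  imports "HOL-Probability.Probability" "HOL-Library.Disjoint_Sets"
begin

definition ordered_partitions :: "'a set \<Rightarrow> 'a set list set" where
  "ordered_partitions A = {L. distinct L \<and> partition_on A (set L)}"

text \<open>A cyclically ordered partition is an ordered partition modulo rotation,
  i.e. the class of all rotations of an ordered partition.\<close>
definition cyc_partitions :: "'a set \<Rightarrow> 'a set list set set" where
  "cyc_partitions A = (\<lambda>L. range (\<lambda>k. rotate k L)) ` ordered_partitions A"

definition cblocks :: "'a set list set \<Rightarrow> 'a set set" where
  "cblocks C = (\<Union>L\<in>C. set L)"

definition cum :: "'x measure \<Rightarrow> nat set \<Rightarrow> (nat \<Rightarrow> 'x \<Rightarrow> real) \<Rightarrow> real" where
  "cum M A f = (\<Sum>C\<in>cyc_partitions A. (-1::real) ^ (card (cblocks C) - 1) *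
       (\<Prod>I\<in>cblocks C. integral\<^sup>L M (\<lambda>x. \<Prod>i\<in>I. f i x)))"

definition dup :: "nat set \<Rightarrow> (nat \<Rightarrow> 'h::metric_space) \<Rightarrow> real" where
  "dup I h = Max {dist (h i) (h j) | i j. i \<in> I \<and> j \<in> I}"

definition dlow :: "nat set \<Rightarrow> nat set \<Rightarrow> (nat \<Rightarrow> 'h::metric_space) \<Rightarrow> real" where
  "dlow I J h = Min {dist (h i) (h j) | i j. i \<in> I \<and> j \<in> J}"

definition dupQ :: "nat set set \<Rightarrow> (nat \<Rightarrow> 'h::metric_space) \<Rightarrow> real" where
  "dupQ Q h = Max {dup I h | I. I \<in> Q}"

definition dlowQ :: "nat set set \<Rightarrow> (nat \<Rightarrow> 'h::metric_space) \<Rightarrow> real" where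
  "dlowQ Q h = Min {dlow I J h | I J. I \<in> Q \<and> J \<in> Q \<and> I \<noteq> J}"

text \<open>Delta_Q(alpha,beta); tuples in H^r are functions nat => H of which only the
  entries indexed by [r] = {1..r} matter.\<close>
definition DeltaQ :: "nat set set \<Rightarrow> real \<Rightarrow> real \<Rightarrow> (nat \<Rightarrow> 'h::metric_space) set" where
  "DeltaQ Q \<alpha> \<beta> = {h. dupQ Q h \<le> \<alpha> \<and> dlowQ Q h > \<beta>}"

text \<open>H is a group (written additively, not assumed commutative), whose topology is
  given by a left-invariant metric dist, locally compact, second countable, with
  continuous group operations. act is a measure-preserving action of H on the
  probability space M. The action on functions is (h.f)(x) = f(act (-h) x).\<close>
definition lact :: "('h::group_add \<Rightarrow> 'x \<Rightarrow> 'x) \<Rightarrow> 'h \<Rightarrow> ('x \<Rightarrow> real) \<Rightarrow> 'x \<Rightarrow> real" where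
  "lact act h f = (\<lambda>x. f (act (- h) x))"

definition setting ::
  "'x measure \<Rightarrow> ('h::{group_add, metric_space, second_countable_topology} \<Rightarrow> 'x \<Rightarrow> 'x)
   \<Rightarrow> ('x \<Rightarrow> real) set \<Rightarrow> (nat \<Rightarrow> ('x \<Rightarrow> real) \<Rightarrow> real)
   \<Rightarrow> (nat \<Rightarrow> real) \<Rightarrow> (nat \<Rightarrow> nat) \<Rightarrow> (nat \<Rightarrow> real) \<Rightarrow> bool" where
  "setting M act \<A> N \<delta> sk \<sigma> \<longleftrightarrow>
    \<comment> \<open>H: locally compact second countable group with left-invariant metric\<close>
    locally compact (UNIV :: 'h set) \<and>
    continuous_on UNIV (\<lambda>p::'h \<times> 'h. fst p + snd p) \<and>
    continuous_on UNIV (\<lambda>x::'h. - x) \<and>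
    (\<forall>g x y::'h. dist (g + x) (g + y) = dist x y) \<and>
    \<comment> \<open>measure-preserving action on a probability space\<close>
    prob_space M \<and>
    (\<lambda>p. act (fst p) (snd p)) \<in> measurable (borel \<Otimes>\<^sub>M M) M \<and>
    (\<forall>h. act h \<in> measurable M M \<and> distr M M (act h) = M) \<and>
    (\<forall>x\<in>space M. act 0 x = x) \<and>
    (\<forall>g h. \<forall>x\<in>space M. act (g + h) x = act g (act h x)) \<and>
    \<comment> \<open>A: H-invariant subalgebra of L-infinity\<close>
    (\<forall>f\<in>\<A>. f \<in> borel_measurable M) \<and>
    (\<forall>f\<in>\<A>. esssup M (\<lambda>x. ereal \<bar>f x\<bar>) < \<infinity>) \<and>
    (\<lambda>x. 0) \<in> \<A> \<and>
    (\<forall>f\<in>\<A>. \<forall>g\<in>\<A>. (\<lambda>x. f x + g x) \<in> \<A>) \<and>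
    (\<forall>f\<in>\<A>. \<forall>g\<in>\<A>. (\<lambda>x. f x * g x) \<in> \<A>) \<and>
    (\<forall>c. \<forall>f\<in>\<A>. (\<lambda>x. c * f x) \<in> \<A>) \<and>
    (\<forall>h. \<forall>f\<in>\<A>. lact act h f \<in> \<A>) \<and>
    \<comment> \<open>N_s, s >= 1, are seminorms on A\<close>
    (\<forall>s\<ge>1. \<forall>f\<in>\<A>. 0 \<le> N s f) \<and>
    (\<forall>s\<ge>1. \<forall>f\<in>\<A>. \<forall>g\<in>\<A>. N s (\<lambda>x. f x + g x) \<le> N s f + N s g) \<and>
    (\<forall>s\<ge>1. \<forall>c. \<forall>f\<in>\<A>. N s (\<lambda>x. c * f x) = \<bar>c\<bar> * N s f) \<and>
    \<comment> \<open>properties of the seminorms, constants depending only on s\<close>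
    (\<forall>s\<ge>1. \<exists>C. \<forall>f\<in>\<A>. N s f \<le> C * N (s + 1) f) \<and>
    (\<forall>s\<ge>1. \<exists>C. \<forall>f\<in>\<A>. esssup M (\<lambda>x. ereal \<bar>f x\<bar>) \<le> ereal (C * N s f)) \<and>
    (\<forall>s\<ge>1. \<sigma> s > 0) \<and>
    (\<forall>s\<ge>1. \<exists>C. \<forall>f\<in>\<A>. \<forall>h. N s (lact act h f) \<le> C * exp (\<sigma> s * dist h 0) * N s f) \<and>
    (\<forall>s\<ge>1. \<exists>C. \<forall>f\<in>\<A>. \<forall>g\<in>\<A>. N s (\<lambda>x. f x * g x) \<le> C * N (s + 1) f * N (s + 1) g) \<and>
    \<comment> \<open>exponential mixing of all orders\<close>
    (\<forall>k\<ge>2. \<delta> k > 0 \<and> sk k > 0 \<and>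
       (\<forall>s>sk k. \<exists>C. \<forall>f. \<forall>h. (\<forall>i\<in>{1..k}. f i \<in> \<A>) \<longrightarrow>
          \<bar>integral\<^sup>L M (\<lambda>x. \<Prod>i\<in>{1..k}. lact act (h i) (f i) x)
             - (\<Prod>i\<in>{1..k}. integral\<^sup>L M (f i))\<bar>
          \<le> C * exp (- \<delta> k * Min {dist (h i) (h j) | i j. i \<in> {1..k} \<and> j \<in> {1..k} \<and> i \<noteq> j})
              * (\<Prod>i\<in>{1..k}. N s (f i)))) \<and>
    \<comment> \<open>monotonicity and compatibility of the exponents\<close>
    (\<forall>s s'. 1 \<le> s \<and> s \<le> s' \<longrightarrow> \<sigma> s \<le> \<sigma> s') \<and>
    (\<forall>k k'. 2 \<le> k \<and> k \<le> k' \<longrightarrow> sk k \<le> sk k') \<and>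
    (\<forall>k k'. 2 \<le> k \<and> k \<le> k' \<longrightarrow> \<delta> k' \<le> \<delta> k) \<and>
    (\<forall>k\<ge>2. \<forall>s\<ge>1. \<delta> k < real k * \<sigma> s)"

end

theory Submission
  imports Defs
begin

definition set_cumulant :: "'a set \<Rightarrow> ('a set \<Rightarrow> real) \<Rightarrow> real" where
  "set_cumulant A m = (\<Sum>C\<in>cyc_partitions A.
     (-1::real) ^ (card (cblocks C) - 1) * (\<Prod>I\<in>cblocks C. m I))"

lemma cum_eq_set_cumulant:
  "cum M A f = set_cumulant A (\<lambda>I. integral\<^sup>L M (\<lambda>x. \<Prod>i\<in>I. f i x))"
  unfolding cum_def set_cumulant_def ..

lemma sorted_wrt_disjnt_iff:
  "{} \<notin> set L \<Longrightarrow> sorted_wrt disjnt L \<longleftrightarrow> distinct L \<and> disjoint (set L)"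
  by (induction L) (auto simp: pairwise_insert disjnt_sym)

lemma ordered_partitions_iff:
  "L \<in> ordered_partitions A \<longleftrightarrow> {} \<notin> set L \<and> \<Union>(set L) = A \<and> sorted_wrt disjnt L"
  unfolding ordered_partitions_def partition_on_def using sorted_wrt_disjnt_iff by blast

lemma ordered_partitions_split_iff:
  assumes "X \<noteq> {}" "Y \<noteq> {}" "disjnt X Y"
  shows "P @ X # Y # R \<in> ordered_partitions A \<longleftrightarrow> P @ (X \<union> Y) # R \<in> ordered_partitions A"
  using assms unfolding ordered_partitions_iff
  by (auto simp: sorted_wrt_append disjnt_sym)

definition rotations :: "'a list \<Rightarrow> 'a list set" where
  "rotations L = range (\<lambda>k. rotate k L)"

lemma cblocks_rotations: "cblocks (rotations L) = set L"
  unfolding cblocks_def rotations_def by auto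

lemma rotations_rotate: "rotations (rotate k L) = rotations L"
proof (cases "L = []")
  case False
  define n where "n = length L"
  have "rotate j L = rotate (j + (n - k mod n)) (rotate k L)" for j
  proof -
    have "k mod n \<le> n"
      using False by (simp add: n_def less_imp_le_nat)
    then have "j + (n - k mod n) + k = j + Suc (k div n) * n"
      using div_mult_mod_eq[of k n] by (simp only: mult_Suc)
    then have "(j + (n - k mod n) + k) mod n = j mod n"
      by (simp only: mod_mult_self1)
    then show ?thesis
      by (metis rotate_rotate rotate_conv_mod n_def)
  qed
  then show ?thesis
    unfolding rotations_def by (auto simp: rotate_rotate)
qed simp

lemma rotate_in_ordered_partitions_iff [simp]:
  "rotate k L \<in> ordered_partitions A \<longleftrightarrow> L \<in> ordered_partitions A"
  unfolding ordered_partitions_def by simp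

lemma cyc_partitions_eq_rotations:
  assumes x0: "x0 \<in> A"
  defines "T \<equiv> {L \<in> ordered_partitions A. x0 \<in> hd L}"
  shows "cyc_partitions A = rotations ` T" and "inj_on rotations T"
proof -
  have "C \<in> rotations ` T" if C: "C \<in> cyc_partitions A" for C
  proof -
    obtain L where L: "L \<in> ordered_partitions A" "C = rotations L"
      using C by (auto simp: cyc_partitions_def rotations_def)
    then obtain i where i: "i < length L" "x0 \<in> L ! i"
      using x0 by (auto simp: ordered_partitions_iff in_set_conv_nth)
    moreover have "L \<noteq> []"
      using i by auto
    ultimately have "rotate i L \<in> T"
      using L(1) by (simp add: T_def hd_rotate_conv_nth)
    then show ?thesis
      using L(2) rotations_rotate by blast
  qed
  moreover have "rotations ` T \<subseteq> cyc_partitions A"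
    unfolding T_def cyc_partitions_def rotations_def by blast
  ultimately show "cyc_partitions A = rotations ` T"
    by blast
  show "inj_on rotations T"
  proof
    fix L L' assume L: "L \<in> T" and L': "L' \<in> T" and eq: "rotations L = rotations L'"
    have "L' \<in> rotations L'"
      unfolding rotations_def using rangeI[of "\<lambda>k. rotate k L'" 0] by simp
    then have "L' \<in> rotations L"
      using eq by simp
    then obtain k where k: "L' = rotate k L"
      unfolding rotations_def by blast
    have op: "L \<in> ordered_partitions A" "x0 \<in> hd L" "x0 \<in> hd L'"
      using L L' by (auto simp: T_def)
    then have ne: "L \<noteq> []"
      using x0 by (auto simp: ordered_partitions_iff)
    define j where "j = k mod length L"
    have j: "j < length L" "x0 \<in> L ! j" "x0 \<in> L ! 0"
      using op(2,3) ne unfolding j_def k by (auto simp: hd_rotate_conv_nth hd_conv_nth[OF ne])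
    have "j = 0"
    proof (rule ccontr)
      assume "j \<noteq> 0"
      moreover have "distinct L" "disjoint (set L)"
        using op(1) by (auto simp: ordered_partitions_def partition_on_def)
      ultimately have "L ! j \<inter> L ! 0 = {}"
        using j(1) ne by (intro disjointD[of "set L"]) (auto simp: nth_eq_iff_index_eq)
      then show False
        using j(2,3) by blast
    qed
    then show "L = L'"
      using k unfolding j_def by (metis rotate_conv_mod rotate0 id_apply)
  qed
qed

definition signed_prod :: "('a set \<Rightarrow> real) \<Rightarrow> 'a set list \<Rightarrow> real" where
  "signed_prod m L = (-1) ^ (length L - 1) * prod_list (map m L)"

lemma set_cumulant_eq_sum_ordered:
  assumes "x0 \<in> A"
  shows "set_cumulant A m = (\<Sum>L\<in>{L \<in> ordered_partitions A. x0 \<in> hd L}. signed_prod m L)"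
proof -
  let ?T = "{L \<in> ordered_partitions A. x0 \<in> hd L}"
  have "set_cumulant A m = (\<Sum>L\<in>?T. (-1) ^ (card (cblocks (rotations L)) - 1)
      * (\<Prod>I\<in>cblocks (rotations L). m I))"
    unfolding set_cumulant_def cyc_partitions_eq_rotations(1)[OF assms]
    by (rule sum.reindex[OF cyc_partitions_eq_rotations(2)[OF assms], unfolded comp_def])
  also have "\<dots> = (\<Sum>L\<in>?T. signed_prod m L)"
    by (intro sum.cong refl)
      (simp add: ordered_partitions_def signed_prod_def cblocks_rotations distinct_card
        prod.distinct_set_conv_list)
  finally show ?thesis .
qed

definition split_merge :: "'a set \<Rightarrow> 'a set list \<Rightarrow> 'a set list" where
  "split_merge U L =
     (let P = takeWhile (\<lambda>X. X \<subseteq> U) L; B = hd (dropWhile (\<lambda>X. X \<subseteq> U) L);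
          R = tl (dropWhile (\<lambda>X. X \<subseteq> U) L)
      in if B \<inter> U \<noteq> {} then P @ (B \<inter> U) # (B - U) # R else butlast P @ (last P \<union> B) # R)"

lemma split_merge_swap:
  assumes P: "\<forall>X\<in>set P. X \<subseteq> U" and Y: "Y \<subseteq> U" "Y \<noteq> {}" and B: "B \<noteq> {}" "B \<inter> U = {}"
  shows "split_merge U (P @ Y # B # R) = P @ (Y \<union> B) # R"
    and "split_merge U (P @ (Y \<union> B) # R) = P @ Y # B # R"
proof -
  have "takeWhile (\<lambda>X. X \<subseteq> U) (P @ Y # B # R) = P @ [Y]"
    "dropWhile (\<lambda>X. X \<subseteq> U) (P @ Y # B # R) = B # R"
    using P Y B by auto
  then show "split_merge U (P @ Y # B # R) = P @ (Y \<union> B) # R"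
    using B unfolding split_merge_def by simp
  have "takeWhile (\<lambda>X. X \<subseteq> U) (P @ (Y \<union> B) # R) = P"
    "dropWhile (\<lambda>X. X \<subseteq> U) (P @ (Y \<union> B) # R) = (Y \<union> B) # R"
    using P B by auto
  moreover have "(Y \<union> B) \<inter> U = Y" "Y \<union> B - U = B"
    using Y B by auto
  ultimately show "split_merge U (P @ (Y \<union> B) # R) = P @ Y # B # R"
    using Y unfolding split_merge_def by simp
qed

lemma split_merge_cases:
  assumes "{} \<notin> set L" "x \<in> hd L" "x \<in> U" "\<exists>X\<in>set L. \<not> X \<subseteq> U"
  obtains P Y B R where "\<forall>X\<in>set P. X \<subseteq> U" "Y \<subseteq> U" "Y \<noteq> {}" "B \<noteq> {}" "B \<inter> U = {}"
    "L = P @ Y # B # R \<or> L = P @ (Y \<union> B) # R"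
proof -
  obtain P B R where L: "L = P @ B # R" and P: "\<forall>X\<in>set P. X \<subseteq> U" and B: "\<not> B \<subseteq> U"
    using split_list_first_prop[OF assms(4)] by blast
  show thesis
  proof (cases "B \<inter> U = {}")
    case True
    then have "P \<noteq> []"
      using assms(2,3) L by auto
    then obtain P' Y where "P = P' @ [Y]"
      by (metis rev_exhaust)
    then show thesis
      using that[of P' Y B R] assms(1) L P B True by auto
  next
    case False
    have "L = P @ (B \<inter> U \<union> (B - U)) # R"
      using L by auto
    then show thesis
      using that[of P "B \<inter> U" "B - U" R] P B False by auto
  qed
qed

lemma signed_prod_merge:
  "m (Y \<union> B) = m Y * m B \<Longrightarrow> signed_prod m (P @ Y # B # R) + signed_prod m (P @ (Y \<union> B) # R) = 0"
  by (simp add: signed_prod_def algebra_simps)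

lemma set_cumulant_eq_0:
  assumes U: "U \<subseteq> A" "U \<noteq> {}" "\<not> A \<subseteq> U"
    and mult: "\<And>B. B \<subseteq> A \<Longrightarrow> m B = m (B \<inter> U) * m (B - U)"
  shows "set_cumulant A m = 0"
proof -
  obtain x0 where x0: "x0 \<in> U"
    using U by blast
  define T where "T = {L \<in> ordered_partitions A. x0 \<in> hd L}"
  have pair: "split_merge U L1 = L2 \<and> split_merge U L2 = L1 \<and> L1 \<noteq> L2 \<and> (L1 \<in> T \<longleftrightarrow> L2 \<in> T) \<and>
      (L2 \<in> T \<longrightarrow> signed_prod m L1 + signed_prod m L2 = 0)"
    if L: "L1 = P @ Y # B # R" "L2 = P @ (Y \<union> B) # R"
      and P: "\<forall>X\<in>set P. X \<subseteq> U" and Y: "Y \<subseteq> U" "Y \<noteq> {}" and B: "B \<noteq> {}" "B \<inter> U = {}"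
    for L1 L2 P Y B R
  proof (intro conjI impI)
    show "split_merge U L1 = L2" "split_merge U L2 = L1"
      unfolding L by (rule split_merge_swap[OF P Y B])+
    have "length L1 = Suc (length L2)"
      unfolding L by simp
    then show "L1 \<noteq> L2"
      by auto
    have "x0 \<in> hd L1 \<longleftrightarrow> x0 \<in> hd L2"
      unfolding L using x0 B by (cases P) auto
    moreover have "L1 \<in> ordered_partitions A \<longleftrightarrow> L2 \<in> ordered_partitions A"
      unfolding L using Y B by (intro ordered_partitions_split_iff) (auto simp: disjnt_def)
    ultimately show "L1 \<in> T \<longleftrightarrow> L2 \<in> T"
      unfolding T_def by blast
    assume "L2 \<in> T"
    then have "Y \<union> B \<subseteq> A"
      unfolding T_def L by (auto simp: ordered_partitions_iff)
    moreover have "(Y \<union> B) \<inter> U = Y" "Y \<union> B - U = B"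
      using Y B by auto
    ultimately show "signed_prod m L1 + signed_prod m L2 = 0"
      unfolding L using mult by (metis signed_prod_merge)
  qed
  have "split_merge U L \<in> T \<and> split_merge U (split_merge U L) = L \<and> split_merge U L \<noteq> L \<and>
      signed_prod m (split_merge U L) + signed_prod m L = 0" if L: "L \<in> T" for L
  proof -
    have "{} \<notin> set L" "x0 \<in> hd L" "\<exists>X\<in>set L. \<not> X \<subseteq> U"
      using L U(3) unfolding T_def ordered_partitions_iff by blast+
    then obtain P Y B R where PYB: "\<forall>X\<in>set P. X \<subseteq> U" "Y \<subseteq> U" "Y \<noteq> {}" "B \<noteq> {}" "B \<inter> U = {}"
      and "L = P @ Y # B # R \<or> L = P @ (Y \<union> B) # R"
      using x0 by (elim split_merge_cases)
    then show ?thesis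
      using pair[OF _ _ PYB] L by (auto simp: add.commute)
  qed
  moreover have "x0 \<in> A"
    using x0 U(1) by blast
  ultimately show ?thesis
    unfolding set_cumulant_eq_sum_ordered[OF \<open>x0 \<in> A\<close>] T_def[symmetric]
    by (intro sum_involution_eq_0[where h = "split_merge U"]) blast+
qed

lemma partition_on_cblocks: "C \<in> cyc_partitions A \<Longrightarrow> partition_on A (cblocks C)"
  by (auto simp: cyc_partitions_def ordered_partitions_def cblocks_rotations
      simp flip: rotations_def)

lemma sum_card_partition_on: "finite A \<Longrightarrow> partition_on A P \<Longrightarrow> (\<Sum>I\<in>P. card I) = card A"
  using sum.partition[of A P "\<lambda>_. 1::nat"] by simp

lemma prod_power_card_partition_on:
  "finite A \<Longrightarrow> partition_on A P \<Longrightarrow> (\<Prod>I\<in>P. c ^ card I) = c ^ card A"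
  by (simp add: power_sum[symmetric] sum_card_partition_on)

lemma card_partition_on_le: "finite A \<Longrightarrow> partition_on A P \<Longrightarrow> card P \<le> card A"
proof -
  assume A: "finite A" and P: "partition_on A P"
  have "card I \<ge> 1" if "I \<in> P" for I
    using A P that by (metis One_nat_def Suc_leI card_gt_0_iff finite_subset partition_onD1
        partition_onD3 Union_upper)
  then have "card P \<le> (\<Sum>I\<in>P. card I)"
    using sum_mono[of P "\<lambda>_. 1::nat" card] by simp
  then show ?thesis
    using sum_card_partition_on[OF A P] by simp
qed

lemma abs_prod_diff_le:
  fixes a b D :: "'i \<Rightarrow> real"
  assumes "finite P" "\<And>I. I \<in> P \<Longrightarrow> \<bar>a I\<bar> \<le> D I" "\<And>I. I \<in> P \<Longrightarrow> \<bar>b I\<bar> \<le> D I"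
  shows "\<bar>(\<Prod>I\<in>P. a I) - (\<Prod>I\<in>P. b I)\<bar> \<le> (\<Sum>I\<in>P. \<bar>a I - b I\<bar> * (\<Prod>J\<in>P - {I}. D J))"
  using assms
proof (induction P rule: finite_induct)
  case (insert x F)
  have D: "0 \<le> D J" "\<bar>a J\<bar> \<le> D J" "\<bar>b J\<bar> \<le> D J" if "J \<in> insert x F" for J
    using insert.prems that by (auto intro: order_trans[OF abs_ge_zero])
  have "(\<Prod>I\<in>insert x F. a I) - (\<Prod>I\<in>insert x F. b I)
      = (a x - b x) * (\<Prod>I\<in>F. a I) + b x * ((\<Prod>I\<in>F. a I) - (\<Prod>I\<in>F. b I))"
    using insert.hyps by (simp add: algebra_simps)
  then have "\<bar>(\<Prod>I\<in>insert x F. a I) - (\<Prod>I\<in>insert x F. b I)\<bar>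
      \<le> \<bar>a x - b x\<bar> * \<bar>\<Prod>I\<in>F. a I\<bar> + \<bar>b x\<bar> * \<bar>(\<Prod>I\<in>F. a I) - (\<Prod>I\<in>F. b I)\<bar>"
    by (metis abs_mult abs_triangle_ineq)
  also have "\<dots> \<le> \<bar>a x - b x\<bar> * (\<Prod>I\<in>F. D I)
      + D x * (\<Sum>I\<in>F. \<bar>a I - b I\<bar> * (\<Prod>J\<in>F - {I}. D J))"
    using insert D by (intro add_mono mult_mono) (auto simp: abs_prod intro: prod_mono prod_nonneg)
  also have "\<dots> = (\<Sum>I\<in>insert x F. \<bar>a I - b I\<bar> * (\<Prod>J\<in>insert x F - {I}. D J))"
  proof -
    have "(\<Prod>J\<in>insert x F - {I}. D J) = D x * (\<Prod>J\<in>F - {I}. D J)" if "I \<in> F" for I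
    proof -
      have "insert x F - {I} = insert x (F - {I})"
        using insert.hyps that by auto
      then show ?thesis
        using insert.hyps by simp
    qed
    then show ?thesis
      using insert.hyps by (simp add: sum_distrib_left algebra_simps)
  qed
  finally show ?case .
qed simp

lemma abs_prod_partition_diff_le:
  fixes m m' :: "'a set \<Rightarrow> real" and K D :: real
  assumes A: "finite A" and P: "partition_on A P" and K: "0 \<le> K" and D: "0 \<le> D"
    and diff: "\<And>I. I \<in> P \<Longrightarrow> \<bar>m I - m' I\<bar> \<le> K * D ^ card I"
    and bound: "\<And>I. I \<in> P \<Longrightarrow> \<bar>m I\<bar> \<le> D ^ card I" "\<And>I. I \<in> P \<Longrightarrow> \<bar>m' I\<bar> \<le> D ^ card I"
  shows "\<bar>(\<Prod>I\<in>P. m I) - (\<Prod>I\<in>P. m' I)\<bar> \<le> card A * K * D ^ card A"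
proof -
  have finP: "finite P"
    using A P by (rule finite_elements)
  have "\<bar>(\<Prod>I\<in>P. m I) - (\<Prod>I\<in>P. m' I)\<bar>
      \<le> (\<Sum>I\<in>P. \<bar>m I - m' I\<bar> * (\<Prod>J\<in>P - {I}. D ^ card J))"
    by (rule abs_prod_diff_le[OF finP bound])
  also have "\<dots> \<le> (\<Sum>I\<in>P. K * D ^ card I * (\<Prod>J\<in>P - {I}. D ^ card J))"
    using D diff by (intro sum_mono mult_right_mono prod_nonneg) auto
  also have "\<dots> = (\<Sum>I\<in>P. K * D ^ card A)"
  proof (rule sum.cong[OF refl])
    fix I assume "I \<in> P"
    then show "K * D ^ card I * (\<Prod>J\<in>P - {I}. D ^ card J) = K * D ^ card A"
      using prod.remove[OF finP, of I "\<lambda>J. D ^ card J"] prod_power_card_partition_on[OF A P, of D]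
      by (simp add: mult.assoc)
  qed
  also have "\<dots> = card P * K * D ^ card A"
    by simp
  also have "\<dots> \<le> card A * K * D ^ card A"
    using card_partition_on_le[OF A P] K D by (intro mult_right_mono) auto
  finally show ?thesis .
qed

lemma abs_set_cumulant_diff_le:
  fixes m m' :: "'a set \<Rightarrow> real" and K D :: real
  assumes "finite A" "0 \<le> K" "0 \<le> D"
    and "\<And>I. I \<subseteq> A \<Longrightarrow> \<bar>m I - m' I\<bar> \<le> K * D ^ card I"
    and "\<And>I. I \<subseteq> A \<Longrightarrow> \<bar>m I\<bar> \<le> D ^ card I" "\<And>I. I \<subseteq> A \<Longrightarrow> \<bar>m' I\<bar> \<le> D ^ card I"
  shows "\<bar>set_cumulant A m - set_cumulant A m'\<bar> \<le> card (cyc_partitions A) * (card A * K * D ^ card A)"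
proof -
  have "\<bar>set_cumulant A m - set_cumulant A m'\<bar> = \<bar>\<Sum>C\<in>cyc_partitions A.
      (-1) ^ (card (cblocks C) - 1) * ((\<Prod>I\<in>cblocks C. m I) - (\<Prod>I\<in>cblocks C. m' I))\<bar>"
    unfolding set_cumulant_def by (simp add: sum_subtractf right_diff_distrib)
  also have "\<dots> \<le> (\<Sum>C\<in>cyc_partitions A. \<bar>(\<Prod>I\<in>cblocks C. m I) - (\<Prod>I\<in>cblocks C. m' I)\<bar>)"
    by (rule order_trans[OF sum_abs]) (simp add: abs_mult)
  also have "\<dots> \<le> (\<Sum>C\<in>cyc_partitions A. card A * K * D ^ card A)"
  proof (rule sum_mono)
    fix C assume "C \<in> cyc_partitions A"
    then have P: "partition_on A (cblocks C)"
      by (rule partition_on_cblocks)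
    then have "I \<subseteq> A" if "I \<in> cblocks C" for I
      using that by (auto simp: partition_on_def)
    then show "\<bar>(\<Prod>I\<in>cblocks C. m I) - (\<Prod>I\<in>cblocks C. m' I)\<bar> \<le> card A * K * D ^ card A"
      using assms by (intro abs_prod_partition_diff_le[OF _ P]) auto
  qed
  finally show ?thesis
    by simp
qed

lemma prod_Int_split:
  fixes m :: "'a set \<Rightarrow> 'b::comm_monoid_mult"
  assumes Q: "finite Q" "disjoint Q" and U: "U \<in> Q" and m: "m {} = 1"
  shows "(\<Prod>J\<in>Q. m (B \<inter> J)) = (\<Prod>J\<in>Q. m (B \<inter> U \<inter> J)) * (\<Prod>J\<in>Q. m ((B - U) \<inter> J))"
proof -
  have disj: "U \<inter> J = {}" if "J \<in> Q - {U}" for J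
    using Q(2) U that by (auto simp: disjoint_def)
  have "(\<Prod>J\<in>Q. m (B \<inter> U \<inter> J)) = m (B \<inter> U)"
    using disj m by (simp add: prod.remove[OF Q(1) U] Int_assoc)
  moreover have "(\<Prod>J\<in>Q. m ((B - U) \<inter> J)) = (\<Prod>J\<in>Q - {U}. m (B \<inter> J))"
  proof -
    have "(\<Prod>J\<in>Q. m ((B - U) \<inter> J)) = m ((B - U) \<inter> U) * (\<Prod>J\<in>Q - {U}. m ((B - U) \<inter> J))"
      by (rule prod.remove[OF Q(1) U])
    also have "(B - U) \<inter> U = {}"
      by blast
    also have "(\<Prod>J\<in>Q - {U}. m ((B - U) \<inter> J)) = (\<Prod>J\<in>Q - {U}. m (B \<inter> J))"
      using disj by (intro prod.cong refl arg_cong[where f = m]) blast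
    finally show ?thesis
      using m by simp
  qed
  ultimately show ?thesis
    by (simp add: prod.remove[OF Q(1) U])
qed

lemma prod_Int_eq_prod_restrict:
  fixes m :: "'a set \<Rightarrow> 'b::comm_monoid_mult"
  assumes Q: "finite Q" "disjoint Q" and m: "m {} = 1"
  shows "(\<Prod>J\<in>Q. m (B \<inter> J)) = (\<Prod>I\<in>(\<inter>) B ` Q - {{}}. m I)"
proof -
  have "(\<Prod>I\<in>(\<inter>) B ` Q - {{}}. m I) = (\<Prod>I\<in>(\<inter>) B ` Q. m I)"
    using Q m by (intro prod.mono_neutral_left) auto
  also have "\<dots> = (\<Prod>J\<in>Q. m (B \<inter> J))"
  proof (rule prod.reindex_nontrivial[OF Q(1), unfolded comp_def])
    fix J J' assume "J \<in> Q" "J' \<in> Q" "J \<noteq> J'" "B \<inter> J = B \<inter> J'"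
    then have "B \<inter> J = {}"
      using Q(2) by (auto simp: disjoint_def)
    then show "m (B \<inter> J) = 1"
      using m by simp
  qed
  finally show ?thesis ..
qed

lemma ex_uniform_const:
  fixes P :: "'a \<Rightarrow> real \<Rightarrow> bool"
  assumes "finite K" and ex: "\<And>k. k \<in> K \<Longrightarrow> \<exists>C. P k C"
    and mono: "\<And>k C C'. P k C \<Longrightarrow> C \<le> C' \<Longrightarrow> P k C'"
  shows "\<exists>C\<ge>c. \<forall>k\<in>K. P k C"
proof -
  obtain C where C: "\<And>k. k \<in> K \<Longrightarrow> P k (C k)"
    using ex by metis
  have "P k (max c (Max (C ` K)))" if "k \<in> K" for k
  proof (rule mono[OF C[OF that]])
    show "C k \<le> max c (Max (C ` K))"
      using \<open>finite K\<close> that by (simp add: max.coboundedI2)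
  qed
  then show ?thesis
    by (intro exI[of _ "max c (Max (C ` K))"]) auto
qed

locale translation_seminorms =
  fixes M :: "'x measure"
    and act :: "'h::{group_add, metric_space} \<Rightarrow> 'x \<Rightarrow> 'x"
    and \<A> :: "('x \<Rightarrow> real) set"
    and N :: "nat \<Rightarrow> ('x \<Rightarrow> real) \<Rightarrow> real"
    and \<sigma> :: "nat \<Rightarrow> real"
  assumes dist_add_left [rule_format]: "\<forall>g x y::'h. dist (g + x) (g + y) = dist x y"
    and prob_space: "prob_space M"
    and measure_preserving [rule_format]: "\<forall>h. act h \<in> M \<rightarrow>\<^sub>M M \<and> distr M M (act h) = M"
    and act_add [rule_format]: "\<forall>g h. \<forall>x\<in>space M. act (g + h) x = act g (act h x)"
    and borel_measurable_\<A> [rule_format]: "\<forall>f\<in>\<A>. f \<in> borel_measurable M"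
    and mult_in_\<A> [rule_format]: "\<forall>f\<in>\<A>. \<forall>g\<in>\<A>. (\<lambda>x. f x * g x) \<in> \<A>"
    and lact_in_\<A> [rule_format]: "\<forall>h. \<forall>f\<in>\<A>. lact act h f \<in> \<A>"
    and N_nonneg [rule_format]: "\<forall>s\<ge>1. \<forall>f\<in>\<A>. 0 \<le> N s f"
    and N_le_N_Suc [rule_format]: "\<forall>s\<ge>1. \<exists>C. \<forall>f\<in>\<A>. N s f \<le> C * N (s + 1) f"
    and esssup_le_N [rule_format]:
      "\<forall>s\<ge>1. \<exists>C. \<forall>f\<in>\<A>. esssup M (\<lambda>x. ereal \<bar>f x\<bar>) \<le> ereal (C * N s f)"
    and \<sigma>_pos [rule_format]: "\<forall>s\<ge>1. \<sigma> s > 0"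
    and N_lact_le [rule_format]:
      "\<forall>s\<ge>1. \<exists>C. \<forall>f\<in>\<A>. \<forall>h. N s (lact act h f) \<le> C * exp (\<sigma> s * dist h 0) * N s f"
    and N_mult_le [rule_format]:
      "\<forall>s\<ge>1. \<exists>C. \<forall>f\<in>\<A>. \<forall>g\<in>\<A>. N s (\<lambda>x. f x * g x) \<le> C * N (s + 1) f * N (s + 1) g"
    and \<sigma>_mono [rule_format]: "\<forall>s s'. 1 \<le> s \<and> s \<le> s' \<longrightarrow> \<sigma> s \<le> \<sigma> s'"

lemma setting_imp_translation_seminorms:
  "setting M act \<A> N \<delta> sk \<sigma> \<Longrightarrow> translation_seminorms M act \<A> N \<sigma>"
  unfolding setting_def by (rule translation_seminorms.intro) (elim conjE; assumption)+

context translation_seminorms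
begin

lemma N_le_N_add: "1 \<le> s \<Longrightarrow> \<exists>C\<ge>0. \<forall>f\<in>\<A>. N s f \<le> C * N (s + j) f"
proof (induction j)
  case 0
  then show ?case
    by (intro exI[of _ 1]) simp
next
  case (Suc j)
  then obtain C where C: "0 \<le> C" "\<forall>f\<in>\<A>. N s f \<le> C * N (s + j) f"
    by blast
  obtain C' where C': "\<forall>f\<in>\<A>. N (s + j) f \<le> C' * N (s + j + 1) f"
    using N_le_N_Suc[of "s + j"] Suc.prems by auto
  have "N s f \<le> (C * max 0 C') * N (s + Suc j) f" if f: "f \<in> \<A>" for f
  proof -
    have "N s f \<le> C * N (s + j) f"
      using C(2) f by blast
    also have "\<dots> \<le> C * (max 0 C' * N (s + j + 1) f)"
      using C' f N_nonneg[of "s + j + 1" f] Suc.prems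
      by (intro mult_left_mono[OF order_trans[OF _ mult_right_mono]] C(1)) auto
    finally show ?thesis
      by (simp add: mult.assoc)
  qed
  then show ?case
    using C(1) by (intro exI[of _ "C * max 0 C'"]) auto
qed

lemma prod_in_\<A>:
  "finite S \<Longrightarrow> S \<noteq> {} \<Longrightarrow> (\<And>i. i \<in> S \<Longrightarrow> \<phi> i \<in> \<A>) \<Longrightarrow> (\<lambda>x. \<Prod>i\<in>S. \<phi> i x) \<in> \<A>"
proof (induction S rule: finite_ne_induct)
  case (insert a F)
  then show ?case
    using mult_in_\<A>[of "\<phi> a" "\<lambda>x. \<Prod>i\<in>F. \<phi> i x"] by simp
qed simp

lemma N_mult_le_nonneg:
  assumes "1 \<le> s"
  shows "\<exists>C\<ge>0. \<forall>f\<in>\<A>. \<forall>g\<in>\<A>. N s (\<lambda>x. f x * g x) \<le> C * N (s + 1) f * N (s + 1) g"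
proof -
  obtain C where C: "\<forall>f\<in>\<A>. \<forall>g\<in>\<A>. N s (\<lambda>x. f x * g x) \<le> C * N (s + 1) f * N (s + 1) g"
    using N_mult_le assms by blast
  have "N s (\<lambda>x. f x * g x) \<le> max 0 C * N (s + 1) f * N (s + 1) g" if "f \<in> \<A>" "g \<in> \<A>" for f g
  proof -
    have "N s (\<lambda>x. f x * g x) \<le> C * N (s + 1) f * N (s + 1) g"
      using C that by blast
    also have "\<dots> \<le> max 0 C * N (s + 1) f * N (s + 1) g"
      using N_nonneg[of "s + 1"] that by (intro mult_right_mono) auto
    finally show ?thesis .
  qed
  then show ?thesis
    by (intro exI[of _ "max 0 C"]) auto
qed

lemma N_lact_le_nonneg:
  assumes "1 \<le> s"
  shows "\<exists>C\<ge>0. \<forall>f\<in>\<A>. \<forall>h. N s (lact act h f) \<le> C * exp (\<sigma> s * dist h 0) * N s f"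
proof -
  obtain C where C: "\<forall>f\<in>\<A>. \<forall>h. N s (lact act h f) \<le> C * exp (\<sigma> s * dist h 0) * N s f"
    using N_lact_le assms by blast
  have "N s (lact act h f) \<le> max 0 C * exp (\<sigma> s * dist h 0) * N s f" if "f \<in> \<A>" for f h
  proof -
    have "N s (lact act h f) \<le> C * exp (\<sigma> s * dist h 0) * N s f"
      using C that by blast
    also have "\<dots> \<le> max 0 C * exp (\<sigma> s * dist h 0) * N s f"
      using N_nonneg[of s] assms that by (intro mult_right_mono) auto
    finally show ?thesis .
  qed
  then show ?thesis
    by (intro exI[of _ "max 0 C"]) auto
qed

lemma N_prod_le:
  assumes "0 < n" "1 \<le> t"
  shows "\<exists>C\<ge>0. \<forall>(S :: 'i set) \<phi>. finite S \<and> card S = n \<and> (\<forall>i\<in>S. \<phi> i \<in> \<A>) \<longrightarrow>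
           N t (\<lambda>x. \<Prod>i\<in>S. \<phi> i x) \<le> C * (\<Prod>i\<in>S. N (t + n) (\<phi> i))"
  using assms
proof (induction n arbitrary: t rule: nat_induct_non_zero)
  case 1
  then obtain C where C: "0 \<le> C" "\<forall>f\<in>\<A>. N t f \<le> C * N (t + 1) f"
    using N_le_N_add by blast
  have "N t (\<lambda>x. \<Prod>i\<in>S. \<phi> i x) \<le> C * (\<Prod>i\<in>S. N (t + 1) (\<phi> i))"
    if "card S = 1" "\<forall>i\<in>S. \<phi> i \<in> \<A>" for S :: "'i set" and \<phi>
    using that C(2) by (auto simp: card_1_singleton_iff)
  then show ?case
    using C(1) by blast
next
  case (Suc n)
  have "\<exists>C\<ge>0. \<forall>(S :: 'i set) \<phi>. finite S \<and> card S = n \<and> (\<forall>i\<in>S. \<phi> i \<in> \<A>) \<longrightarrow>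
      N (t + 1) (\<lambda>x. \<Prod>i\<in>S. \<phi> i x) \<le> C * (\<Prod>i\<in>S. N (t + 1 + n) (\<phi> i))"
    using Suc.IH[of "t + 1"] Suc.hyps by auto
  then obtain C where C: "0 \<le> C" "\<forall>(S :: 'i set) \<phi>. finite S \<and> card S = n \<and> (\<forall>i\<in>S. \<phi> i \<in> \<A>) \<longrightarrow>
      N (t + 1) (\<lambda>x. \<Prod>i\<in>S. \<phi> i x) \<le> C * (\<Prod>i\<in>S. N (t + 1 + n) (\<phi> i))"
    by blast
  obtain Cp where Cp: "0 \<le> Cp"
    "\<forall>f\<in>\<A>. \<forall>g\<in>\<A>. N t (\<lambda>x. f x * g x) \<le> Cp * N (t + 1) f * N (t + 1) g"
    using N_mult_le_nonneg Suc.prems by blast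
  obtain R where R: "0 \<le> R" "\<forall>f\<in>\<A>. N (t + 1) f \<le> R * N (t + 1 + n) f"
    using N_le_N_add[of "t + 1"] by auto
  have "N t (\<lambda>x. \<Prod>i\<in>S. \<phi> i x) \<le> (Cp * R * C) * (\<Prod>i\<in>S. N (t + Suc n) (\<phi> i))"
    if S: "finite S" "card S = Suc n" and \<phi>: "\<forall>i\<in>S. \<phi> i \<in> \<A>" for S :: "'i set" and \<phi>
  proof -
    obtain a where a: "a \<in> S"
      using S by fastforce
    define F where "F = S - {a}"
    have F: "finite F" "card F = n" "S = insert a F" "a \<notin> F"
      using S a by (auto simp: F_def)
    then have "F \<noteq> {}"
      using Suc.hyps by auto
    have \<phi>F: "(\<lambda>x. \<Prod>i\<in>F. \<phi> i x) \<in> \<A>"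
      using F \<open>F \<noteq> {}\<close> \<phi> by (intro prod_in_\<A>) auto
    have "N t (\<lambda>x. \<Prod>i\<in>S. \<phi> i x) = N t (\<lambda>x. \<phi> a x * (\<Prod>i\<in>F. \<phi> i x))"
      using F by simp
    also have "\<dots> \<le> Cp * N (t + 1) (\<phi> a) * N (t + 1) (\<lambda>x. \<Prod>i\<in>F. \<phi> i x)"
      using Cp(2) \<phi> a \<phi>F by (simp add: bspec[of _ _ "\<lambda>x. \<Prod>i\<in>F. \<phi> i x"])
    also have "\<dots> \<le> Cp * (R * N (t + 1 + n) (\<phi> a)) * (C * (\<Prod>i\<in>F. N (t + 1 + n) (\<phi> i)))"
      using Cp(1) R C F \<phi> a \<phi>F N_nonneg[of "t + 1"] N_nonneg[of "t + 1 + n"]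
      by (intro mult_mono mult_left_mono mult_nonneg_nonneg) auto
    also have "\<dots> = (Cp * R * C) * (\<Prod>i\<in>S. N (t + Suc n) (\<phi> i))"
      using F by (simp add: algebra_simps)
    finally show ?thesis .
  qed
  then show ?case
    using Cp(1) R(1) C(1) by (intro exI[of _ "Cp * R * C"]) auto
qed

lemma N_prod_lact_le:
  assumes s: "1 \<le> s"
  shows "\<exists>C\<ge>1. \<forall>(S :: 'i set) g f \<alpha>. finite S \<and> S \<noteq> {} \<and> card S \<le> r \<and> f \<in> \<A> \<and>
      (\<forall>i\<in>S. dist (g i) 0 \<le> \<alpha>) \<longrightarrow>
      N s (\<lambda>x. \<Prod>i\<in>S. lact act (g i) f x) \<le> C * exp (\<sigma> (s + r) * \<alpha>) ^ card S * N (s + r) f ^ card S"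
proof -
  define P where "P n C \<longleftrightarrow> (\<forall>(S :: 'i set) g f \<alpha>. finite S \<and> card S = n \<and> f \<in> \<A> \<and>
      (\<forall>i\<in>S. dist (g i) 0 \<le> \<alpha>) \<longrightarrow>
      N s (\<lambda>x. \<Prod>i\<in>S. lact act (g i) f x) \<le> C * exp (\<sigma> (s + r) * \<alpha>) ^ n * N (s + r) f ^ n)"
    for n C
  have ex: "\<exists>C. P n C" if n: "n \<in> {1..r}" for n
  proof -
    obtain C1 where C1: "0 \<le> C1" "\<forall>(S :: 'i set) \<phi>. finite S \<and> card S = n \<and> (\<forall>i\<in>S. \<phi> i \<in> \<A>) \<longrightarrow>
        N s (\<lambda>x. \<Prod>i\<in>S. \<phi> i x) \<le> C1 * (\<Prod>i\<in>S. N (s + n) (\<phi> i))"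
      using N_prod_le[of n s] n s by auto
    obtain Cl where Cl: "0 \<le> Cl"
      "\<forall>f\<in>\<A>. \<forall>h. N (s + n) (lact act h f) \<le> Cl * exp (\<sigma> (s + n) * dist h 0) * N (s + n) f"
      using N_lact_le_nonneg[of "s + n"] s by auto
    obtain R where R: "0 \<le> R" "\<forall>f\<in>\<A>. N (s + n) f \<le> R * N (s + n + (r - n)) f"
      using N_le_N_add[of "s + n"] s by auto
    have "P n (C1 * (Cl * R) ^ n)"
      unfolding P_def
    proof (intro allI impI, elim conjE)
      fix S :: "'i set" and g :: "'i \<Rightarrow> 'h" and f \<alpha>
      assume S: "finite S" "card S = n" and f: "f \<in> \<A>" and g: "\<forall>i\<in>S. dist (g i) 0 \<le> \<alpha>"
      let ?E = "exp (\<sigma> (s + r) * \<alpha>)"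
      have "N (s + n) (lact act (g i) f) \<le> Cl * ?E * (R * N (s + r) f)" if i: "i \<in> S" for i
      proof -
        have "\<sigma> (s + n) * dist (g i) 0 \<le> \<sigma> (s + r) * \<alpha>"
          using \<sigma>_mono[of "s + n" "s + r"] \<sigma>_pos[of "s + n"] g i n s
          by (intro mult_mono) auto
        then have E: "Cl * exp (\<sigma> (s + n) * dist (g i) 0) \<le> Cl * ?E"
          using Cl(1) by (intro mult_left_mono) auto
        have R': "N (s + n) f \<le> R * N (s + r) f"
          using R(2) f n by auto
        have "Cl * exp (\<sigma> (s + n) * dist (g i) 0) * N (s + n) f \<le> Cl * ?E * (R * N (s + r) f)"
          by (rule mult_mono[OF E R']) (use Cl(1) N_nonneg[of "s + n" f] f s in auto)
        then show ?thesis
          using Cl(2) f by (meson order_trans)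
      qed
      then have prod_le: "(\<Prod>i\<in>S. N (s + n) (lact act (g i) f)) \<le> (\<Prod>i\<in>S. Cl * ?E * (R * N (s + r) f))"
        using N_nonneg lact_in_\<A> f s by (intro prod_mono) auto
      have "N s (\<lambda>x. \<Prod>i\<in>S. lact act (g i) f x) \<le> C1 * (\<Prod>i\<in>S. N (s + n) (lact act (g i) f))"
        by (rule C1(2)[rule_format, of S "\<lambda>i. lact act (g i) f"]) (use S f lact_in_\<A> in auto)
      also have "\<dots> \<le> C1 * (\<Prod>i\<in>S. Cl * ?E * (R * N (s + r) f))"
        by (rule mult_left_mono[OF prod_le C1(1)])
      also have "\<dots> = C1 * (Cl * R) ^ n * ?E ^ n * N (s + r) f ^ n"
        using S(2) by (simp add: power_mult_distrib mult_ac)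
      finally show "N s (\<lambda>x. \<Prod>i\<in>S. lact act (g i) f x) \<le> C1 * (Cl * R) ^ n * ?E ^ n * N (s + r) f ^ n" .
    qed
    then show ?thesis ..
  qed
  have mono: "P n C'" if P: "P n C" and CC: "C \<le> C'" for n C C'
    unfolding P_def
  proof (intro allI impI)
    fix S :: "'i set" and g :: "'i \<Rightarrow> 'h" and f \<alpha>
    assume H: "finite S \<and> card S = n \<and> f \<in> \<A> \<and> (\<forall>i\<in>S. dist (g i) 0 \<le> \<alpha>)"
    then have "N s (\<lambda>x. \<Prod>i\<in>S. lact act (g i) f x) \<le> C * exp (\<sigma> (s + r) * \<alpha>) ^ n * N (s + r) f ^ n"
      using P unfolding P_def by blast
    also have "\<dots> \<le> C' * exp (\<sigma> (s + r) * \<alpha>) ^ n * N (s + r) f ^ n"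
      using H CC N_nonneg[of "s + r" f] s by (intro mult_right_mono) auto
    finally show "N s (\<lambda>x. \<Prod>i\<in>S. lact act (g i) f x) \<le> C' * exp (\<sigma> (s + r) * \<alpha>) ^ n * N (s + r) f ^ n" .
  qed
  have "\<exists>C\<ge>1. \<forall>n\<in>{1..r}. P n C"
    by (rule ex_uniform_const) (auto intro: ex mono)
  then obtain C where C: "1 \<le> C" "\<forall>n\<in>{1..r}. P n C"
    by blast
  show ?thesis
  proof (intro exI[of _ C] conjI allI impI)
    fix S :: "'i set" and g :: "'i \<Rightarrow> 'h" and f \<alpha>
    assume S: "finite S \<and> S \<noteq> {} \<and> card S \<le> r \<and> f \<in> \<A> \<and> (\<forall>i\<in>S. dist (g i) 0 \<le> \<alpha>)"
    then have "card S \<in> {1..r}"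
      by (simp add: Suc_le_eq card_gt_0_iff)
    then have "P (card S) C"
      using C(2) by blast
    then show "N s (\<lambda>x. \<Prod>i\<in>S. lact act (g i) f x) \<le> C * exp (\<sigma> (s + r) * \<alpha>) ^ card S * N (s + r) f ^ card S"
      using S unfolding P_def by blast
  qed (rule C(1))
qed

end

lemma (in prob_space) abs_integral_le_AE:
  fixes g :: "'a \<Rightarrow> real"
  assumes "AE x in M. \<bar>g x\<bar> \<le> K" "0 \<le> K"
  shows "\<bar>integral\<^sup>L M g\<bar> \<le> K"
proof -
  have "\<bar>integral\<^sup>L M g\<bar> \<le> (\<integral>x. \<bar>g x\<bar> \<partial>M)"
    using integral_norm_bound[of M g] by simp
  also have "\<dots> \<le> (\<integral>x. K \<partial>M)"
    using assms by (intro integral_mono_AE') auto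
  finally show ?thesis
    by (simp add: prob_space)
qed

lemma set_cumulant_prod_Int_eq_0:
  fixes m :: "'a set \<Rightarrow> real"
  assumes Q: "partition_on A Q" "2 \<le> card Q" and m: "m {} = 1"
  shows "set_cumulant A (\<lambda>B. \<Prod>J\<in>Q. m (B \<inter> J)) = 0"
proof -
  have finQ: "finite Q"
    using Q(2) card.infinite by fastforce
  have "\<not> card Q \<le> Suc 0"
    using Q(2) by simp
  then obtain U V where UV: "U \<in> Q" "V \<in> Q" "U \<noteq> V"
    using card_le_Suc0_iff_eq[OF finQ] by blast
  have disj: "disjoint Q" "{} \<notin> Q" "\<Union>Q = A"
    using Q(1) by (auto simp: partition_on_def)
  have "U \<inter> V = {}" "V \<noteq> {}" "U \<noteq> {}" "U \<subseteq> A" "V \<subseteq> A"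
    using UV disj by (auto simp: disjoint_def)
  show ?thesis
  proof (rule set_cumulant_eq_0)
    show "U \<subseteq> A" "U \<noteq> {}" "\<not> A \<subseteq> U"
      using \<open>U \<inter> V = {}\<close> \<open>V \<noteq> {}\<close> \<open>U \<noteq> {}\<close> \<open>U \<subseteq> A\<close> \<open>V \<subseteq> A\<close> by blast+
    show "(\<Prod>J\<in>Q. m (B \<inter> J)) = (\<Prod>J\<in>Q. m (B \<inter> U \<inter> J)) * (\<Prod>J\<in>Q. m ((B - U) \<inter> J))" for B
      by (rule prod_Int_split[where m = m, OF finQ disj(1) UV(1) m])
  qed
qed

lemma dist_le_dupQ:
  fixes h :: "nat \<Rightarrow> 'h::metric_space"
  assumes "finite Q" "J \<in> Q" "finite J" "i \<in> J" "j \<in> J"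
  shows "dist (h i) (h j) \<le> dupQ Q h"
proof -
  have "finite {dist (h i) (h j) | i j. i \<in> J \<and> j \<in> J}"
    by (rule finite_subset[of _ "(\<lambda>(i, j). dist (h i) (h j)) ` (J \<times> J)"]) (use assms(3) in auto)
  then have "dist (h i) (h j) \<le> dup J h"
    unfolding dup_def by (rule Max_ge) (use assms(4,5) in auto)
  also have "\<dots> \<le> dupQ Q h"
    unfolding dupQ_def by (rule Max_ge) (use assms(1,2) in auto)
  finally show ?thesis .
qed

lemma dlowQ_le_dist:
  fixes h :: "nat \<Rightarrow> 'h::metric_space"
  assumes "finite Q" "I \<in> Q" "J \<in> Q" "I \<noteq> J" "finite I" "finite J" "i \<in> I" "j \<in> J"
  shows "dlowQ Q h \<le> dist (h i) (h j)"
proof -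
  have "finite {dlow I' J' h | I' J'. I' \<in> Q \<and> J' \<in> Q \<and> I' \<noteq> J'}"
    by (rule finite_subset[of _ "(\<lambda>(I', J'). dlow I' J' h) ` (Q \<times> Q)"]) (use assms(1) in auto)
  then have "dlowQ Q h \<le> dlow I J h"
    unfolding dlowQ_def by (rule Min_le) (use assms(2-4) in auto)
  also have "finite {dist (h i) (h j) | i j. i \<in> I \<and> j \<in> J}"
    by (rule finite_subset[of _ "(\<lambda>(i, j). dist (h i) (h j)) ` (I \<times> J)"]) (use assms(5,6) in auto)
  then have "dlow I J h \<le> dist (h i) (h j)"
    unfolding dlow_def by (rule Min_le) (use assms(7,8) in auto)
  finally show ?thesis .
qed

lemma DeltaQ_restrict_dist:
  fixes h :: "nat \<Rightarrow> 'h::metric_space"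
  assumes Q: "partition_on {1..r} Q" and h: "h \<in> DeltaQ Q \<alpha> \<beta>"
  shows "\<forall>I'\<in>(\<inter>) I ` Q - {{}}. \<forall>i\<in>I'. \<forall>j\<in>I'. dist (h i) (h j) \<le> \<alpha>"
    and "\<forall>I'\<in>(\<inter>) I ` Q - {{}}. \<forall>J'\<in>(\<inter>) I ` Q - {{}}. I' \<noteq> J' \<longrightarrow>
           (\<forall>i\<in>I'. \<forall>j\<in>J'. \<beta> \<le> dist (h i) (h j))"
proof -
  have finQ: "finite Q"
    using Q by (rule finite_elements[OF finite_atLeastAtMost])
  have finJ: "finite J" if "J \<in> Q" for J
    using that Q by (auto simp: partition_on_def intro: finite_subset)
  have dQ: "dupQ Q h \<le> \<alpha>" and lQ: "\<beta> < dlowQ Q h"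
    using h by (auto simp: DeltaQ_def)
  show "\<forall>I'\<in>(\<inter>) I ` Q - {{}}. \<forall>i\<in>I'. \<forall>j\<in>I'. dist (h i) (h j) \<le> \<alpha>"
  proof (intro ballI)
    fix I' i j assume "I' \<in> (\<inter>) I ` Q - {{}}" "i \<in> I'" "j \<in> I'"
    then obtain J where "J \<in> Q" "i \<in> J" "j \<in> J"
      by blast
    then show "dist (h i) (h j) \<le> \<alpha>"
      using dist_le_dupQ[OF finQ _ finJ] dQ by (meson order_trans)
  qed
  show "\<forall>I'\<in>(\<inter>) I ` Q - {{}}. \<forall>J'\<in>(\<inter>) I ` Q - {{}}. I' \<noteq> J' \<longrightarrow>
      (\<forall>i\<in>I'. \<forall>j\<in>J'. \<beta> \<le> dist (h i) (h j))"
  proof (intro ballI impI)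
    fix I' J' i j assume "I' \<in> (\<inter>) I ` Q - {{}}" "J' \<in> (\<inter>) I ` Q - {{}}" "I' \<noteq> J'" "i \<in> I'" "j \<in> J'"
    then obtain J J'' where "J \<in> Q" "J'' \<in> Q" "J \<noteq> J''" "i \<in> J" "j \<in> J''"
      by blast
    then show "\<beta> \<le> dist (h i) (h j)"
      using dlowQ_le_dist[OF finQ _ _ _ finJ finJ] lQ by (meson less_imp_le order_less_le_trans)
  qed
qed

definition mixing_bound ::
  "'x measure \<Rightarrow> ('h::{group_add, metric_space} \<Rightarrow> 'x \<Rightarrow> 'x) \<Rightarrow> ('x \<Rightarrow> real) set
   \<Rightarrow> (nat \<Rightarrow> ('x \<Rightarrow> real) \<Rightarrow> real) \<Rightarrow> real \<Rightarrow> nat \<Rightarrow> nat \<Rightarrow> real \<Rightarrow> bool" where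
  "mixing_bound M act \<A> N \<delta> k s C \<longleftrightarrow> (\<forall>f h. (\<forall>i\<in>{1..k}. f i \<in> \<A>) \<longrightarrow>
     \<bar>integral\<^sup>L M (\<lambda>x. \<Prod>i\<in>{1..k}. lact act (h i) (f i) x) - (\<Prod>i\<in>{1..k}. integral\<^sup>L M (f i))\<bar>
       \<le> C * exp (- \<delta> * Min {dist (h i) (h j) | i j. i \<in> {1..k} \<and> j \<in> {1..k} \<and> i \<noteq> j})
           * (\<Prod>i\<in>{1..k}. N s (f i)))"

lemma setting_mixing_bound:
  assumes "setting M act \<A> N \<delta> sk \<sigma>" "2 \<le> k" "k \<le> r" "sk r < s"
  shows "\<exists>C. mixing_bound M act \<A> N (\<delta> k) k s C"
proof -
  have "\<forall>k\<ge>2. 0 < \<delta> k \<and> 0 < sk k \<and> (\<forall>s>sk k. \<exists>C. mixing_bound M act \<A> N (\<delta> k) k s C)"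
    using assms(1) unfolding setting_def mixing_bound_def by (elim conjE) assumption
  moreover have "\<forall>k k'. 2 \<le> k \<and> k \<le> k' \<longrightarrow> sk k \<le> sk k'"
    using assms(1) unfolding setting_def by (elim conjE) assumption
  ultimately show ?thesis
    using assms(2-4) by (meson order_le_less_trans)
qed

lemma setting_mixing_rate:
  assumes "setting M act \<A> N \<delta> sk \<sigma>" "2 \<le> k" "k \<le> r"
  shows "0 \<le> \<delta> k \<and> \<delta> r \<le> \<delta> k"
proof -
  have "\<forall>k\<ge>2. 0 < \<delta> k \<and> 0 < sk k \<and> (\<forall>s>sk k. \<exists>C. mixing_bound M act \<A> N (\<delta> k) k s C)"
    using assms(1) unfolding setting_def mixing_bound_def by (elim conjE) assumption
  moreover have "\<forall>k k'. 2 \<le> k \<and> k \<le> k' \<longrightarrow> \<delta> k' \<le> \<delta> k"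
    using assms(1) unfolding setting_def by (elim conjE) assumption
  ultimately show ?thesis
    using assms(2,3) by (meson less_imp_le)
qed

context translation_seminorms
begin

definition moment :: "('i \<Rightarrow> 'h) \<Rightarrow> ('x \<Rightarrow> real) \<Rightarrow> 'i set \<Rightarrow> real" where
  "moment h f I = (\<integral>x. (\<Prod>i\<in>I. lact act (h i) f x) \<partial>M)"

lemma moment_empty [simp]: "moment h f {} = 1"
proof -
  interpret prob_space M
    by (rule prob_space)
  show ?thesis
    by (simp add: moment_def prob_space)
qed

lemma lact_lact: "x \<in> space M \<Longrightarrow> lact act g (lact act g' f) x = lact act (g + g') f x"
  by (simp only: lact_def minus_add act_add)

lemma integral_lact:
  assumes "f \<in> borel_measurable M"
  shows "(\<integral>x. lact act g f x \<partial>M) = integral\<^sup>L M f"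
  using integral_distr[OF measure_preserving[of "- g", THEN conjunct1] assms]
  by (simp add: measure_preserving lact_def)

lemma AE_abs_lact_le:
  assumes "f \<in> borel_measurable M" "AE x in M. \<bar>f x\<bar> \<le> c"
  shows "AE x in M. \<bar>lact act h f x\<bar> \<le> c"
proof -
  have "{y \<in> space M. \<bar>f y\<bar> \<le> c} \<in> sets M"
    using assms(1) by measurable
  then have "(AE x in M. \<bar>f (act (- h) x)\<bar> \<le> c) \<longleftrightarrow> (AE x in distr M M (act (- h)). \<bar>f x\<bar> \<le> c)"
    by (rule AE_distr_iff[OF measure_preserving[of "- h", THEN conjunct1], symmetric])
  also have "distr M M (act (- h)) = M"
    using measure_preserving by blast
  finally show ?thesis
    using assms(2) unfolding lact_def by simp
qed

lemma abs_moment_le: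
  assumes s: "1 \<le> s"
  shows "\<exists>C\<ge>1. \<forall>(h :: 'i \<Rightarrow> 'h) f I. finite I \<and> f \<in> \<A> \<longrightarrow> \<bar>moment h f I\<bar> \<le> (C * N s f) ^ card I"
proof -
  obtain C where C: "\<forall>f\<in>\<A>. esssup M (\<lambda>x. ereal \<bar>f x\<bar>) \<le> ereal (C * N s f)"
    using esssup_le_N s by blast
  have "\<bar>moment h f I\<bar> \<le> (max 1 C * N s f) ^ card I" if I: "finite I" and f: "f \<in> \<A>"
    for h :: "'i \<Rightarrow> 'h" and f I
  proof -
    interpret prob_space M
      by (rule prob_space)
    let ?c = "max 1 C * N s f"
    have c: "0 \<le> ?c" "C * N s f \<le> ?c"
      using N_nonneg[OF s f] by (auto intro: mult_right_mono)
    have ess: "esssup M (\<lambda>x. ereal \<bar>f x\<bar>) \<le> ereal ?c"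
      using C f c(2) by (auto intro: order_trans)
    have Af: "AE x in M. \<bar>f x\<bar> \<le> ?c"
      using esssup_AE[of "\<lambda>x. ereal \<bar>f x\<bar>" M]
    proof (rule eventually_mono)
      fix x
      assume "ereal \<bar>f x\<bar> \<le> esssup M (\<lambda>x. ereal \<bar>f x\<bar>)"
      then show "\<bar>f x\<bar> \<le> ?c"
        using ess by (metis ereal_less_eq(3) order_trans)
    qed
    have "AE x in M. \<forall>i\<in>I. \<bar>lact act (h i) f x\<bar> \<le> ?c"
      using I by (intro AE_finite_allI AE_abs_lact_le[OF borel_measurable_\<A>[OF f] Af])
    then have "AE x in M. \<bar>\<Prod>i\<in>I. lact act (h i) f x\<bar> \<le> ?c ^ card I"
      by eventually_elim (auto simp: abs_prod intro: order_trans[OF prod_mono])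
    then show ?thesis
      unfolding moment_def using c(1) by (intro abs_integral_le_AE) auto
  qed
  then show ?thesis
    by (intro exI[of _ "max 1 C"]) auto
qed

lemma lact_prod_translates:
  assumes "x \<in> space M"
  shows "lact act g (\<lambda>y. \<Prod>i\<in>I. lact act (- g + h i) f y) x = (\<Prod>i\<in>I. lact act (h i) f x)"
proof -
  have "lact act g (\<lambda>y. \<Prod>i\<in>I. lact act (- g + h i) f y) x = (\<Prod>i\<in>I. lact act g (lact act (- g + h i) f) x)"
    by (simp add: lact_def)
  also have "\<dots> = (\<Prod>i\<in>I. lact act (h i) f x)"
    using assms by (simp add: lact_lact add.assoc[symmetric])
  finally show ?thesis .
qed

lemma moment_partition:
  assumes "finite B" "partition_on B P"
  shows "moment h f B = (\<integral>x. (\<Prod>I\<in>P. lact act (h (\<rho> I)) (\<lambda>y. \<Prod>i\<in>I. lact act (- h (\<rho> I) + h i) f y) x) \<partial>M)"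
  unfolding moment_def
  by (intro Bochner_Integration.integral_cong refl) (simp add: prod.partition[OF assms] lact_prod_translates)

lemma moment_eq_integral_translates:
  assumes "f \<in> \<A>" "finite I" "I \<noteq> {}"
  shows "moment h f I = (\<integral>y. (\<Prod>i\<in>I. lact act (- g + h i) f y) \<partial>M)"
proof -
  have "(\<lambda>y. \<Prod>i\<in>I. lact act (- g + h i) f y) \<in> borel_measurable M"
    using assms by (intro borel_measurable_\<A> prod_in_\<A> lact_in_\<A>)
  then show ?thesis
    unfolding moment_def
    by (subst integral_lact[symmetric, where g = g]) (auto intro: Bochner_Integration.integral_cong simp: lact_prod_translates)
qed

lemma mixing_bound_mono:
  assumes "1 \<le> s" "mixing_bound M act \<A> N \<delta> k s C" "C \<le> C'"
  shows "mixing_bound M act \<A> N \<delta> k s C'"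
  unfolding mixing_bound_def
proof (intro allI impI)
  fix f :: "nat \<Rightarrow> 'x \<Rightarrow> real" and h :: "nat \<Rightarrow> 'h"
  assume f: "\<forall>i\<in>{1..k}. f i \<in> \<A>"
  let ?e = "exp (- \<delta> * Min {dist (h i) (h j) | i j. i \<in> {1..k} \<and> j \<in> {1..k} \<and> i \<noteq> j})"
  have "0 \<le> (\<Prod>i\<in>{1..k}. N s (f i))"
    using f N_nonneg assms(1) by (intro prod_nonneg) auto
  then have "C * ?e * (\<Prod>i\<in>{1..k}. N s (f i)) \<le> C' * ?e * (\<Prod>i\<in>{1..k}. N s (f i))"
    using assms(3) by (intro mult_right_mono) auto
  then show "\<bar>integral\<^sup>L M (\<lambda>x. \<Prod>i\<in>{1..k}. lact act (h i) (f i) x) - (\<Prod>i\<in>{1..k}. integral\<^sup>L M (f i))\<bar>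
      \<le> C' * ?e * (\<Prod>i\<in>{1..k}. N s (f i))"
    using assms(2) f unfolding mixing_bound_def by (meson order_trans)
qed

lemma mixing_bound_on_set:
  assumes mix: "mixing_bound M act \<A> N \<delta> (card P) s C" and "0 \<le> C" "0 \<le> \<delta>" "1 \<le> s"
    and P: "finite P" "2 \<le> card P" and F: "\<And>p. p \<in> P \<Longrightarrow> F p \<in> \<A>"
    and sep: "\<And>p q. p \<in> P \<Longrightarrow> q \<in> P \<Longrightarrow> p \<noteq> q \<Longrightarrow> \<beta> \<le> dist (g p) (g q)"
  shows "\<bar>(\<integral>x. (\<Prod>p\<in>P. lact act (g p) (F p) x) \<partial>M) - (\<Prod>p\<in>P. integral\<^sup>L M (F p))\<bar>
    \<le> C * exp (- \<delta> * \<beta>) * (\<Prod>p\<in>P. N s (F p))"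
proof -
  let ?k = "card P"
  obtain e where e: "bij_betw e {1..?k} P"
    using ex_bij_betw_nat_finite_1[OF P(1)] by blast
  let ?D = "{dist (g (e i)) (g (e j)) | i j. i \<in> {1..?k} \<and> j \<in> {1..?k} \<and> i \<noteq> j}"
  have "\<beta> \<le> Min ?D"
  proof (rule Min.boundedI)
    show "finite ?D"
      by (rule finite_subset[of _ "(\<lambda>(i, j). dist (g (e i)) (g (e j))) ` ({1..?k} \<times> {1..?k})"]) auto
    have "dist (g (e 1)) (g (e 2)) \<in> ?D"
      using P(2) by (intro CollectI exI[of _ 1] exI[of _ 2]) auto
    then show "?D \<noteq> {}"
      by blast
    show "\<beta> \<le> d" if d: "d \<in> ?D" for d
    proof -
      obtain i j where ij: "d = dist (g (e i)) (g (e j))" "i \<in> {1..?k}" "j \<in> {1..?k}" "i \<noteq> j"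
        using d by blast
      then have "e i \<noteq> e j" "e i \<in> P" "e j \<in> P"
        using e by (auto simp: bij_betw_def inj_on_eq_iff)
      then show ?thesis
        using sep ij(1) by blast
    qed
  qed
  then have exp_le: "exp (- \<delta> * Min ?D) \<le> exp (- \<delta> * \<beta>)"
    using \<open>0 \<le> \<delta>\<close> by (simp add: mult_left_mono)
  have reindex: "(\<Prod>i\<in>{1..?k}. \<phi> (e i)) = (\<Prod>p\<in>P. \<phi> p)" for \<phi> :: "_ \<Rightarrow> real"
    by (rule prod.reindex_bij_betw[OF e])
  have reindex_fun: "(\<lambda>x. \<Prod>i\<in>{1..?k}. lact act (g (e i)) (F (e i)) x) = (\<lambda>x. \<Prod>p\<in>P. lact act (g p) (F p) x)"
    by (rule ext, rule reindex)
  have "\<bar>(\<integral>x. (\<Prod>p\<in>P. lact act (g p) (F p) x) \<partial>M) - (\<Prod>p\<in>P. integral\<^sup>L M (F p))\<bar>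
      = \<bar>(\<integral>x. (\<Prod>i\<in>{1..?k}. lact act (g (e i)) (F (e i)) x) \<partial>M) - (\<Prod>i\<in>{1..?k}. integral\<^sup>L M (F (e i)))\<bar>"
    by (simp only: reindex_fun reindex[of "\<lambda>p. integral\<^sup>L M (F p)"])
  also have "\<dots> \<le> C * exp (- \<delta> * Min ?D) * (\<Prod>i\<in>{1..?k}. N s (F (e i)))"
    by (rule mix[unfolded mixing_bound_def, rule_format, of "\<lambda>i. F (e i)" "\<lambda>i. g (e i)"])
      (use F bij_betwE[OF e] in blast)
  also have "\<dots> \<le> C * exp (- \<delta> * \<beta>) * (\<Prod>i\<in>{1..?k}. N s (F (e i)))"
    using \<open>0 \<le> C\<close> F bij_betwE[OF e] N_nonneg \<open>1 \<le> s\<close> exp_le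
    by (intro mult_right_mono mult_left_mono prod_nonneg) auto
  also have "\<dots> = C * exp (- \<delta> * \<beta>) * (\<Prod>p\<in>P. N s (F p))"
    by (simp only: reindex[of "\<lambda>p. N s (F p)"])
  finally show ?thesis .
qed

lemma dist_minus_add_0: "dist (- g + h) 0 = dist h (g :: 'h)"
  using dist_add_left[of g "- g + h" 0] by (simp add: add.assoc[symmetric])

lemma moment_cluster_bound:
  assumes s: "1 \<le> s"
    and mix: "\<And>k. 2 \<le> k \<Longrightarrow> k \<le> r \<Longrightarrow> \<exists>C. mixing_bound M act \<A> N (\<delta> k) k s C"
    and \<delta>: "\<And>k. 2 \<le> k \<Longrightarrow> k \<le> r \<Longrightarrow> 0 \<le> \<delta> k \<and> \<delta> r \<le> \<delta> k"
  shows "\<exists>C\<ge>0. \<forall>B P (h :: 'i \<Rightarrow> 'h) f \<alpha> \<beta>. finite B \<and> card B \<le> r \<and> partition_on B P \<and> f \<in> \<A> \<and>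
    0 \<le> \<alpha> \<and> 0 \<le> \<beta> \<and> (\<forall>I\<in>P. \<forall>i\<in>I. \<forall>j\<in>I. dist (h i) (h j) \<le> \<alpha>) \<and>
    (\<forall>I\<in>P. \<forall>J\<in>P. I \<noteq> J \<longrightarrow> (\<forall>i\<in>I. \<forall>j\<in>J. \<beta> \<le> dist (h i) (h j))) \<longrightarrow>
    \<bar>moment h f B - (\<Prod>I\<in>P. moment h f I)\<bar>
      \<le> C * exp (- (\<beta> * \<delta> r - real r * \<alpha> * \<sigma> (s + r))) * N (s + r) f ^ card B"
proof -
  have "\<exists>C\<ge>0. \<forall>k\<in>{2..r}. mixing_bound M act \<A> N (\<delta> k) k s C"
    using mix by (intro ex_uniform_const) (auto intro: mixing_bound_mono[OF s])
  then obtain Cx where Cx: "0 \<le> Cx" "\<And>k. 2 \<le> k \<Longrightarrow> k \<le> r \<Longrightarrow> mixing_bound M act \<A> N (\<delta> k) k s Cx"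
    by auto
  obtain K where K: "1 \<le> K" "\<forall>(S :: 'i set) g f \<alpha>. finite S \<and> S \<noteq> {} \<and> card S \<le> r \<and> f \<in> \<A> \<and>
      (\<forall>i\<in>S. dist (g i) 0 \<le> \<alpha>) \<longrightarrow>
      N s (\<lambda>x. \<Prod>i\<in>S. lact act (g i) f x) \<le> K * exp (\<sigma> (s + r) * \<alpha>) ^ card S * N (s + r) f ^ card S"
    using N_prod_lact_le[OF s] by blast
  show ?thesis
  proof (intro exI[of _ "Cx * K ^ r"] conjI allI impI; (elim conjE)?)
    fix B P and h :: "'i \<Rightarrow> 'h" and f \<alpha> \<beta>
    assume B: "finite B" "card B \<le> r" "partition_on B P" and f: "f \<in> \<A>" and \<alpha>: "0 \<le> \<alpha>" and \<beta>: "0 \<le> \<beta>"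
      and near: "\<forall>I\<in>P. \<forall>i\<in>I. \<forall>j\<in>I. dist (h i) (h j) \<le> \<alpha>"
      and far: "\<forall>I\<in>P. \<forall>J\<in>P. I \<noteq> J \<longrightarrow> (\<forall>i\<in>I. \<forall>j\<in>J. \<beta> \<le> dist (h i) (h j))"
    let ?E = "exp (\<sigma> (s + r) * \<alpha>)" and ?Nf = "N (s + r) f"
    have Nf: "0 \<le> ?Nf"
      using N_nonneg f s by simp
    have E: "1 \<le> ?E"
      using \<sigma>_pos[of "s + r"] s \<alpha> by simp
    have finP: "finite P" and cardP: "card P \<le> r"
      using B finite_elements card_partition_on_le[OF B(1,3)] by auto
    show "\<bar>moment h f B - (\<Prod>I\<in>P. moment h f I)\<bar>
        \<le> Cx * K ^ r * exp (- (\<beta> * \<delta> r - real r * \<alpha> * \<sigma> (s + r))) * ?Nf ^ card B"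
    proof (cases "card P \<le> 1")
      case True
      then have "P = {} \<or> (\<exists>I. P = {I})"
        using finP by (auto simp: le_Suc_eq card_1_singleton_iff)
      then have "(\<Prod>I\<in>P. moment h f I) = moment h f B"
        using B(3) by (auto simp: partition_on_def)
      then show ?thesis
        using Cx(1) K(1) Nf by simp
    next
      case False
      have "\<forall>I\<in>P. \<exists>i. i \<in> I"
        using partition_onD3[OF B(3)] by (metis ex_in_conv)
      then obtain \<rho> where \<rho>: "\<And>I. I \<in> P \<Longrightarrow> \<rho> I \<in> I"
        by metis
      define G where "G I = (\<lambda>y. \<Prod>i\<in>I. lact act (- h (\<rho> I) + h i) f y)" for I
      have I: "finite I" "I \<noteq> {}" "card I \<le> r" if "I \<in> P" for I
      proof -
        have "I \<subseteq> B"
          using that partition_onD1[OF B(3)] by blast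
        then show "finite I" "card I \<le> r"
          using B(1,2) card_mono[of B I] finite_subset by auto
        show "I \<noteq> {}"
          using that \<rho> by blast
      qed
      have G: "G I \<in> \<A>" if "I \<in> P" for I
        unfolding G_def using I[OF that] f by (intro prod_in_\<A> lact_in_\<A>)
      have "\<bar>moment h f B - (\<Prod>I\<in>P. moment h f I)\<bar>
          = \<bar>(\<integral>x. (\<Prod>I\<in>P. lact act (h (\<rho> I)) (G I) x) \<partial>M) - (\<Prod>I\<in>P. integral\<^sup>L M (G I))\<bar>"
        using moment_eq_integral_translates[OF f I(1,2)] moment_partition[OF B(1,3)]
        by (simp add: G_def)
      also have "\<dots> \<le> Cx * exp (- \<delta> (card P) * \<beta>) * (\<Prod>I\<in>P. N s (G I))"
        using False cardP far \<rho> G \<delta>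
        by (intro mixing_bound_on_set[OF Cx(2) Cx(1) _ s finP]) auto
      also have "\<dots> \<le> Cx * exp (- \<delta> r * \<beta>) * (\<Prod>I\<in>P. K * ?E ^ card I * ?Nf ^ card I)"
      proof (intro mult_mono mult_left_mono prod_mono conjI)
        show "exp (- \<delta> (card P) * \<beta>) \<le> exp (- \<delta> r * \<beta>)"
          using \<delta>[of "card P"] False cardP \<beta> by (simp add: mult_right_mono)
        fix I assume "I \<in> P"
        then show "N s (G I) \<le> K * ?E ^ card I * ?Nf ^ card I"
          using K(2) I f near \<rho> unfolding G_def by (simp add: dist_minus_add_0)
        show "0 \<le> N s (G I)"
          using N_nonneg G \<open>I \<in> P\<close> s by simp
      qed (use Cx(1) N_nonneg G s in \<open>auto intro: prod_nonneg\<close>)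
      also have "\<dots> = Cx * exp (- \<delta> r * \<beta>) * (K ^ card P * ?E ^ card B * ?Nf ^ card B)"
        using prod_power_card_partition_on[OF B(1,3), of ?E] prod_power_card_partition_on[OF B(1,3), of ?Nf]
        by (simp add: prod.distrib)
      also have "\<dots> \<le> Cx * exp (- \<delta> r * \<beta>) * (K ^ r * ?E ^ r * ?Nf ^ card B)"
        using Cx(1) K(1) E Nf cardP B(2)
        by (intro mult_left_mono mult_right_mono mult_mono power_increasing) auto
      also have "\<dots> = Cx * K ^ r * (exp (- \<delta> r * \<beta>) * ?E ^ r) * ?Nf ^ card B"
        by (simp add: algebra_simps)
      also have "exp (- \<delta> r * \<beta>) * ?E ^ r = exp (- (\<beta> * \<delta> r - real r * \<alpha> * \<sigma> (s + r)))"
        by (simp add: exp_of_nat_mult[symmetric] exp_add[symmetric] algebra_simps)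
      finally show ?thesis .
    qed
  qed (use Cx(1) K(1) in simp)
qed

lemma cumulant_bound:
  assumes s: "1 \<le> s"
    and mix: "\<And>k. 2 \<le> k \<Longrightarrow> k \<le> r \<Longrightarrow> \<exists>C. mixing_bound M act \<A> N (\<delta> k) k s C"
    and \<delta>: "\<And>k. 2 \<le> k \<Longrightarrow> k \<le> r \<Longrightarrow> 0 \<le> \<delta> k \<and> \<delta> r \<le> \<delta> k"
  shows "\<exists>C. \<forall>Q \<alpha> \<beta> (h :: nat \<Rightarrow> 'h) f. partition_on {1..r} Q \<and> 2 \<le> card Q \<and> 0 \<le> \<alpha> \<and> \<alpha> < \<beta> \<and>
    h \<in> DeltaQ Q \<alpha> \<beta> \<and> f \<in> \<A> \<longrightarrow>
    \<bar>cum M {1..r} (\<lambda>i. lact act (h i) f)\<bar> \<le> C * exp (- (\<beta> * \<delta> r - real r * \<alpha> * \<sigma> (s + r))) * N (s + r) f ^ r"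
proof -
  obtain Ccl where Ccl: "0 \<le> Ccl" "\<forall>B P (h :: nat \<Rightarrow> 'h) f \<alpha> \<beta>. finite B \<and> card B \<le> r \<and> partition_on B P \<and>
    f \<in> \<A> \<and> 0 \<le> \<alpha> \<and> 0 \<le> \<beta> \<and> (\<forall>I\<in>P. \<forall>i\<in>I. \<forall>j\<in>I. dist (h i) (h j) \<le> \<alpha>) \<and>
    (\<forall>I\<in>P. \<forall>J\<in>P. I \<noteq> J \<longrightarrow> (\<forall>i\<in>I. \<forall>j\<in>J. \<beta> \<le> dist (h i) (h j))) \<longrightarrow>
    \<bar>moment h f B - (\<Prod>I\<in>P. moment h f I)\<bar>
      \<le> Ccl * exp (- (\<beta> * \<delta> r - real r * \<alpha> * \<sigma> (s + r))) * N (s + r) f ^ card B"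
    using moment_cluster_bound[OF s mix \<delta>] by blast
  obtain Cm where Cm: "1 \<le> Cm"
    "\<forall>(h :: nat \<Rightarrow> 'h) f I. finite I \<and> f \<in> \<A> \<longrightarrow> \<bar>moment h f I\<bar> \<le> (Cm * N (s + r) f) ^ card I"
    using abs_moment_le[of "s + r"] s by auto
  show ?thesis
  proof (intro exI[of _ "card (cyc_partitions {1..r}) * (r * Ccl * Cm ^ r)"] allI impI; elim conjE)
    fix Q \<alpha> \<beta> and h :: "nat \<Rightarrow> 'h" and f
    assume Q: "partition_on {1..r} Q" "2 \<le> card Q" and \<alpha>: "0 \<le> \<alpha>" "\<alpha> < \<beta>"
      and h: "h \<in> DeltaQ Q \<alpha> \<beta>" and f: "f \<in> \<A>"
    let ?X = "exp (- (\<beta> * \<delta> r - real r * \<alpha> * \<sigma> (s + r)))" and ?Nf = "N (s + r) f"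
    let ?D = "Cm * ?Nf"
    define m' where "m' I = (\<Prod>J\<in>Q. moment h f (I \<inter> J))" for I
    have finQ: "finite Q" and disjQ: "disjoint Q"
      using Q(1) finite_elements[OF finite_atLeastAtMost] by (auto simp: partition_on_def)
    have Nf: "0 \<le> ?Nf"
      using N_nonneg f s by simp
    have m'_eq: "m' I = (\<Prod>I'\<in>(\<inter>) I ` Q - {{}}. moment h f I')" for I
      unfolding m'_def by (rule prod_Int_eq_prod_restrict[where m = "moment h f", OF finQ disjQ moment_empty])
    have restrict: "partition_on I ((\<inter>) I ` Q - {{}})" if "I \<subseteq> {1..r}" for I
      using partition_on_restrict[OF Q(1), of I] that by (simp add: Int_absorb2)
    have finI: "finite I" "card I \<le> r" if "I \<subseteq> {1..r}" for I
      using that card_mono[of "{1..r}" I] finite_subset by auto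
    have bound: "\<bar>moment h f I\<bar> \<le> ?D ^ card I" if "finite I" for I
      using Cm(2) f that by blast
    have diff: "\<bar>moment h f I - m' I\<bar> \<le> Ccl * ?X * ?D ^ card I" if I: "I \<subseteq> {1..r}" for I
    proof -
      have "\<bar>moment h f I - m' I\<bar> \<le> Ccl * ?X * ?Nf ^ card I"
        unfolding m'_eq
        by (rule Ccl(2)[rule_format, where B = I and P = "(\<inter>) I ` Q - {{}}" and h = h and f = f
              and \<alpha> = \<alpha> and \<beta> = \<beta>])
          (use finI[OF I] restrict[OF I] f \<alpha> DeltaQ_restrict_dist[OF Q(1) h, of I] in auto)
      also have "\<dots> \<le> Ccl * ?X * ?D ^ card I"
        using Ccl(1) Cm(1) Nf by (intro mult_left_mono power_mono) (auto simp: mult_le_cancel_right1)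
      finally show ?thesis .
    qed
    have bound': "\<bar>m' I\<bar> \<le> ?D ^ card I" if I: "I \<subseteq> {1..r}" for I
    proof -
      have "\<bar>m' I\<bar> = (\<Prod>I'\<in>(\<inter>) I ` Q - {{}}. \<bar>moment h f I'\<bar>)"
        unfolding m'_eq by (rule abs_prod)
      also have "\<dots> \<le> (\<Prod>I'\<in>(\<inter>) I ` Q - {{}}. ?D ^ card I')"
        using bound finI[OF I] by (intro prod_mono) auto
      also have "\<dots> = ?D ^ card I"
        by (rule prod_power_card_partition_on[OF finI(1)[OF I] restrict[OF I]])
      finally show ?thesis .
    qed
    have "set_cumulant {1..r} m' = 0"
      unfolding m'_def by (rule set_cumulant_prod_Int_eq_0[where m = "moment h f", OF Q moment_empty])
    moreover have "\<bar>set_cumulant {1..r} (moment h f) - set_cumulant {1..r} m'\<bar>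
        \<le> card (cyc_partitions {1..r}) * (card {1..r} * (Ccl * ?X) * ?D ^ card {1..r})"
      using Ccl(1) Cm(1) Nf diff bound bound' finI
      by (intro abs_set_cumulant_diff_le) (auto simp: mult.assoc)
    ultimately show "\<bar>cum M {1..r} (\<lambda>i. lact act (h i) f)\<bar>
        \<le> card (cyc_partitions {1..r}) * (r * Ccl * Cm ^ r) * ?X * ?Nf ^ r"
      by (simp add: cum_eq_set_cumulant moment_def[abs_def] power_mult_distrib mult_ac)
  qed
qed

end

theorem proposition6p1:
  fixes M :: "'x measure"
    and act :: "'h::{group_add, metric_space, second_countable_topology} \<Rightarrow> 'x \<Rightarrow> 'x"
    and \<A> :: "('x \<Rightarrow> real) set"
    and N :: "nat \<Rightarrow> ('x \<Rightarrow> real) \<Rightarrow> real"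
    and \<delta> :: "nat \<Rightarrow> real" and sk :: "nat \<Rightarrow> nat" and \<sigma> :: "nat \<Rightarrow> real"
    and r s :: nat
  assumes "setting M act \<A> N \<delta> sk \<sigma>"
    and "r \<ge> 3"
    and "s > sk r + r"
  shows "\<exists>C. \<forall>Q \<alpha> \<beta> (h :: nat \<Rightarrow> 'h) f.
           partition_on {1..r} Q \<and> card Q \<ge> 2 \<and> 0 \<le> \<alpha> \<and> \<alpha> < \<beta> \<and>
           h \<in> DeltaQ Q \<alpha> \<beta> \<and> f \<in> \<A> \<longrightarrow>
           \<bar>cum M {1..r} (\<lambda>i. lact act (h i) f)\<bar>
             \<le> C * exp (- (\<beta> * \<delta> r - real r * \<alpha> * \<sigma> s)) * N s f ^ r"
proof -
  interpret translation_seminorms M act \<A> N \<sigma>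
    using assms(1) by (rule setting_imp_translation_seminorms)
  define s0 where "s0 = s - r"
  have s0: "1 \<le> s0" "sk r < s0" "s0 + r = s"
    using assms(3) by (auto simp: s0_def)
  have mix: "\<exists>C. mixing_bound M act \<A> N (\<delta> k) k s0 C" if "2 \<le> k" "k \<le> r" for k
    using setting_mixing_bound[OF assms(1) that s0(2)] .
  have rate: "0 \<le> \<delta> k \<and> \<delta> r \<le> \<delta> k" if "2 \<le> k" "k \<le> r" for k
    using setting_mixing_rate[OF assms(1) that] .
  show ?thesis
    using cumulant_bound[OF s0(1) mix rate] unfolding s0(3) .
qed

end
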